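(* Let \(a,b,c\) be positive integers and let \(m\) be a positive integer that is not a perfect square. Then \((a\sqrt m,\,b+c\sqrt m)\) spans \(1\) in \(\mathbb Z[\sqrt m]\) if and only if \((am,\,b^2-c^2m)\) spans \(1\) in \(\mathbb Z\), i.e. \(\gcd(am,b^2-c^2m)=1\).
   Context: \(\mathbb Z[\sqrt m]=\{u+v\sqrt m\mid u,v\in\mathbb Z\}\). For a commutative ring \(R\) with \(1\), a pair \((\alpha_1,\alpha_2)\) spans \(1\) in \(R\) if \(\lambda_1\alpha_1+\lambda_2\alpha_2=1\) for some \(\lambda_1,\lambda_2\in R\). *)

theory Defs
  imports Main
begin

text \<open>Elements u + v sqrt m of Z[sqrt m] are represented by integer pairs (u, v);
  the representation is faithful since m is not a perfect square.\<close>

definition zsqrt_mult :: "int \<Rightarrow> int \<times> int \<Rightarrow> int \<times> int \<Rightarrow> int \<times> int" where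
  "zsqrt_mult m x y = (fst x * fst y + m * snd x * snd y, fst x * snd y + snd x * fst y)"

definition zsqrt_add :: "int \<times> int \<Rightarrow> int \<times> int \<Rightarrow> int \<times> int" where
  "zsqrt_add x y = (fst x + fst y, snd x + snd y)"

definition spans_one_zsqrt :: "int \<Rightarrow> int \<times> int \<Rightarrow> int \<times> int \<Rightarrow> bool" where
  "spans_one_zsqrt m \<alpha>1 \<alpha>2 \<longleftrightarrow>
     (\<exists>l1 l2. zsqrt_add (zsqrt_mult m l1 \<alpha>1) (zsqrt_mult m l2 \<alpha>2) = (1, 0))"

definition spans_one_int :: "int \<Rightarrow> int \<Rightarrow> bool" where
  "spans_one_int x y \<longleftrightarrow> (\<exists>l1 l2. l1 * x + l2 * y = 1)"

end

theory Submission
  imports Defs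
begin

text \<open>Taking norms in a relation \<open>\<lambda>\<^sub>1 a\<surd>m + \<lambda>\<^sub>2 \<beta> = 1\<close> gives
  \<open>1 = N(\<lambda>\<^sub>1 a\<surd>m) + N(\<lambda>\<^sub>2 \<beta>) + (cross term)\<close>, where
  \<open>N(\<lambda>\<^sub>1 a\<surd>m) = -a\<^sup>2m N(\<lambda>\<^sub>1)\<close> and the cross term is a multiple of \<open>am\<close>,
  so \<open>am\<close> and \<open>N(\<beta>)\<close> span 1 in \<open>\<int>\<close>. Conversely, from \<open>l\<^sub>1 am + l\<^sub>2 N(\<beta>) = 1\<close>
  one gets \<open>l\<^sub>1\<surd>m \<cdot> a\<surd>m + l\<^sub>2 \<beta>' \<cdot> \<beta> = 1\<close> with \<open>\<beta>'\<close> the conjugate of \<open>\<beta>\<close>.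
  Neither direction uses positivity or that \<open>m\<close> is not a square.\<close>

definition zsqrt_norm :: "int \<Rightarrow> int \<times> int \<Rightarrow> int" where
  "zsqrt_norm m x = fst x ^ 2 - m * snd x ^ 2"

definition zsqrt_conj :: "int \<times> int \<Rightarrow> int \<times> int" where
  "zsqrt_conj x = (fst x, - snd x)"

lemma zsqrt_norm_mult:
  "zsqrt_norm m (zsqrt_mult m x y) = zsqrt_norm m x * zsqrt_norm m y"
  unfolding zsqrt_norm_def zsqrt_mult_def by (simp add: algebra_simps power2_eq_square)

lemma zsqrt_norm_add:
  "zsqrt_norm m (zsqrt_add x y)
     = zsqrt_norm m x + zsqrt_norm m y + 2 * (fst x * fst y - m * snd x * snd y)"
  unfolding zsqrt_norm_def zsqrt_add_def by (simp add: algebra_simps power2_eq_square)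

lemma zsqrt_mult_conj_self: "zsqrt_mult m (zsqrt_conj x) x = (zsqrt_norm m x, 0)"
  unfolding zsqrt_mult_def zsqrt_conj_def zsqrt_norm_def by (simp add: power2_eq_square)

lemma zsqrt_mult_assoc:
  "zsqrt_mult m (zsqrt_mult m x y) z = zsqrt_mult m x (zsqrt_mult m y z)"
  unfolding zsqrt_mult_def by (simp add: algebra_simps)

lemma spans_one_int_norm_if_spans_one_zsqrt:
  assumes "spans_one_zsqrt m (0, a) \<beta>"
  shows "spans_one_int (a * m) (zsqrt_norm m \<beta>)"
proof -
  obtain l1 l2 where rel: "zsqrt_add (zsqrt_mult m l1 (0, a)) (zsqrt_mult m l2 \<beta>) = (1, 0)"
    using assms unfolding spans_one_zsqrt_def by blast
  define z where "z = zsqrt_mult m l2 \<beta>"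
  have "1 = zsqrt_norm m (zsqrt_add (zsqrt_mult m l1 (0, a)) z)"
    using rel by (simp add: z_def zsqrt_norm_def)
  also have "\<dots> = (2 * (snd l1 * fst z - fst l1 * snd z) - a * zsqrt_norm m l1) * (a * m)
                  + zsqrt_norm m l2 * zsqrt_norm m \<beta>"
    unfolding zsqrt_norm_add zsqrt_norm_mult z_def
    by (simp add: zsqrt_norm_def zsqrt_mult_def algebra_simps power2_eq_square)
  finally show ?thesis
    unfolding spans_one_int_def by (metis mult.commute)
qed

lemma spans_one_zsqrt_if_spans_one_int_norm:
  assumes "spans_one_int (a * m) (zsqrt_norm m \<beta>)"
  shows "spans_one_zsqrt m (0, a) \<beta>"
proof -
  obtain l1 l2 where rel: "l1 * (a * m) + l2 * zsqrt_norm m \<beta> = 1"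
    using assms unfolding spans_one_int_def by blast
  have "zsqrt_mult m (zsqrt_mult m (l2, 0) (zsqrt_conj \<beta>)) \<beta> = (l2 * zsqrt_norm m \<beta>, 0)"
    unfolding zsqrt_mult_assoc zsqrt_mult_conj_self by (simp add: zsqrt_mult_def)
  moreover have "zsqrt_mult m (0, l1) (0, a) = (l1 * (a * m), 0)"
    by (simp add: zsqrt_mult_def algebra_simps)
  ultimately have "zsqrt_add (zsqrt_mult m (0, l1) (0, a))
                     (zsqrt_mult m (zsqrt_mult m (l2, 0) (zsqrt_conj \<beta>)) \<beta>) = (1, 0)"
    using rel by (simp add: zsqrt_add_def)
  then show ?thesis
    unfolding spans_one_zsqrt_def by blast
qed

theorem lemma7:
  fixes a b c m :: int
  assumes "a > 0" and "b > 0" and "c > 0" and "m > 0"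
    and "\<not> (\<exists>k::int. m = k ^ 2)"
  shows "spans_one_zsqrt m (0, a) (b, c) \<longleftrightarrow> spans_one_int (a * m) (b ^ 2 - c ^ 2 * m)"
proof -
  have "zsqrt_norm m (b, c) = b ^ 2 - c ^ 2 * m"
    by (simp add: zsqrt_norm_def)
  then show ?thesis
    using spans_one_int_norm_if_spans_one_zsqrt spans_one_zsqrt_if_spans_one_int_norm
    by metis
qed

end
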